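(* Let Algorithm DEW be run with learning rate $\eta>0$ and delay bound $d_{\max}\ge\max_t d_t$, with $\eta'=\min\{\eta,(4e\,d_{\max})^{-1}\}$, and suppose $N=\max_{t\in[T]}N_t\ge1$. Then for every $i\in\{1,\dots,T\}$ and every $a\in[K]$, for every realization, $$q^a(\Psi_i)\le\left(1+\frac{1}{2N-1}\right)q^a(\Psi_{i-1}).$$
   Context: Setting: fix integers $K\ge 2$, $T\ge 1$, $[K]=\{1,\dots,K\}$. An oblivious adversary fixes in advance losses $\ell_t^a\in[0,1]$ and nonnegative integer delays $d_t$. In each round $t$ the learner picks $A_t\in[K]$ and at the end of round $t$ observes the pairs $(s,\ell_s^{A_s})$ for all $s\le t$ with $s+d_s=t$. Algorithm DEW with inputs $\eta>0$ and $d_{\max}$: set $\eta'=\min\{\eta,(4e\,d_{\max})^{-1}\}$, $w_0^a=1$. For $t=1,2,\dots$: $p_t^a=w_{t-1}^a/\sum_b w_{t-1}^b$; draw $A_t\sim p_t$; at the end of round $t$, for every $s$ with $s+d_s=t$ form $\hat\ell_s^a=\ell_s^a\mathbb 1(a=A_s)/p_s^a$; update $w_t^a=w_{t-1}^a\exp(-\eta'\sum_{s:\,s+d_s=t}\hat\ell_s^a)$. Notation: for a set $C$ of time indices, $q^a(C)=\dfrac{\exp(-\eta'\sum_{s\in C}\hat\ell_s^a)}{\sum_b\exp(-\eta'\sum_{s\in C}\hat\ell_s^b)}$. $N_t=|\{s\in[T]: s+d_s\in[t,t+d_t)\}|$ and $N=\max_tN_t$ (note $N\le 2d_{\max}$).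 $\mathcal Z=(z_1,\dots,z_T)$ is the permutation of $[T]$ sorted in ascending order of $z+d_z$, ties broken randomly, and $\Psi_i=\{z_1,\dots,z_i\}$ (so $\Psi_0=\emptyset$). *)

theory Defs
  imports Complex_Main
begin

text \<open>Conventions: rounds are 1..T, arms are 1..K. Losses l t a, delays d t,
  actions A t (a realization of the learner's draws). A probability history
  assigns p t a for rounds t.\<close>

definition dew_lhat :: "(nat \<Rightarrow> nat \<Rightarrow> real) \<Rightarrow> (nat \<Rightarrow> nat) \<Rightarrow> (nat \<Rightarrow> nat \<Rightarrow> real)
    \<Rightarrow> nat \<Rightarrow> nat \<Rightarrow> real" where
  "dew_lhat l A p s a = (if a = A s then l s a / p s a else 0)"

definition dew_q :: "nat \<Rightarrow> real \<Rightarrow> (nat \<Rightarrow> nat \<Rightarrow> real) \<Rightarrow> (nat \<Rightarrow> nat)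
    \<Rightarrow> (nat \<Rightarrow> nat \<Rightarrow> real) \<Rightarrow> nat set \<Rightarrow> nat \<Rightarrow> real" where
  "dew_q K eta' l A p C a =
     exp (- eta' * (\<Sum>s\<in>C. dew_lhat l A p s a)) /
     (\<Sum>b\<in>{1..K}. exp (- eta' * (\<Sum>s\<in>C. dew_lhat l A p s b)))"

text \<open>History of the algorithm's distributions: dew_hist t contains p_1,...,p_t.
  p_{t+1} uses all feedback s with s + d_s \<le> t (received by the end of round t).\<close>
primrec dew_hist :: "nat \<Rightarrow> real \<Rightarrow> (nat \<Rightarrow> nat \<Rightarrow> real) \<Rightarrow> (nat \<Rightarrow> nat) \<Rightarrow> (nat \<Rightarrow> nat)
    \<Rightarrow> nat \<Rightarrow> (nat \<Rightarrow> nat \<Rightarrow> real)" where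
  "dew_hist K eta' l d A 0 = (\<lambda>t a. 0)"
| "dew_hist K eta' l d A (Suc t) =
     (dew_hist K eta' l d A t)(Suc t :=
        dew_q K eta' l A (dew_hist K eta' l d A t) {s. 1 \<le> s \<and> s + d s \<le> t})"

definition dew_p :: "nat \<Rightarrow> real \<Rightarrow> (nat \<Rightarrow> nat \<Rightarrow> real) \<Rightarrow> (nat \<Rightarrow> nat) \<Rightarrow> (nat \<Rightarrow> nat)
    \<Rightarrow> nat \<Rightarrow> nat \<Rightarrow> real" where
  "dew_p K eta' l d A t = dew_hist K eta' l d A t t"

definition dew_eta' :: "real \<Rightarrow> nat \<Rightarrow> real" where
  "dew_eta' eta dmax = min eta (1 / (4 * exp 1 * real dmax))"

definition N_t :: "nat \<Rightarrow> (nat \<Rightarrow> nat) \<Rightarrow> nat \<Rightarrow> nat" where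
  "N_t T d t = card {s \<in> {1..T}. t \<le> s + d s \<and> s + d s < t + d t}"

definition N_max :: "nat \<Rightarrow> (nat \<Rightarrow> nat) \<Rightarrow> nat" where
  "N_max T d = Max ((N_t T d) ` {1..T})"

end

theory Submission
  imports Defs
begin

text \<open>Adding one observation s to a feedback set C changes the exponential weights
  only at the played arm b = A s, and by 1 - x \<le> exp (-x) the normaliser shrinks by at most
  the factor 1 - q(C,b) \<eta>' l(s,b) / p(s,b); hence every q(C) grows by at most the inverse
  factor. Along the arrival order \<Psi> 0 \<subseteq> \<Psi> 1 \<subseteq> \<dots> this factor is bounded by strong induction:
  when z j was played the learner had seen exactly some prefix \<Psi> k, so p(z j) = q(\<Psi> k), and at
  most 2 dmax arrivals lie strictly between k and j. By induction each of them inflates q(b)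
  by at most 1/(1 - 1/(4 dmax)), together by at most 2, so the factor at step j is at most
  2\<eta>' \<le> 1/(4 dmax) \<le> 1/(2N).\<close>

lemma dew_q_pos: "1 \<le> K \<Longrightarrow> 0 < dew_q K e l A p C a"
  unfolding dew_q_def by (intro divide_pos_pos exp_gt_zero sum_pos) auto

lemma dew_q_cong:
  assumes "\<And>r. r \<in> C \<Longrightarrow> p r = p' r"
  shows "dew_q K e l A p C = dew_q K e l A p' C"
proof -
  have "(\<Sum>s\<in>C. dew_lhat l A p s b) = (\<Sum>s\<in>C. dew_lhat l A p' s b)" for b
    using assms by (intro sum.cong) (simp_all add: dew_lhat_def)
  then show ?thesis by (simp add: dew_q_def fun_eq_iff)
qed

lemma dew_hist_eq_dew_p: "1 \<le> r \<Longrightarrow> r \<le> t \<Longrightarrow> dew_hist K e l d A t r = dew_p K e l d A r"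
  by (induction t) (auto simp: dew_p_def le_Suc_eq)

lemma dew_p_eq_dew_q:
  assumes "1 \<le> s"
  shows "dew_p K e l d A s = dew_q K e l A (dew_p K e l d A) {r. 1 \<le> r \<and> r + d r \<le> s - 1}"
proof -
  obtain t where t: "s = Suc t" using assms by (cases s) auto
  have "dew_p K e l d A s = dew_q K e l A (dew_hist K e l d A t) {r. 1 \<le> r \<and> r + d r \<le> t}"
    by (simp add: dew_p_def t)
  also have "\<dots> = dew_q K e l A (dew_p K e l d A) {r. 1 \<le> r \<and> r + d r \<le> t}"
    by (intro dew_q_cong dew_hist_eq_dew_p) auto
  finally show ?thesis by (simp add: t)
qed

lemma dew_q_insert_le:
  assumes "1 \<le> K" and "finite C" and "s \<notin> C" and "0 \<le> e"
    and "A s \<in> {1..K}" and "0 \<le> l s (A s)" and "0 < p s (A s)"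
    and lt1: "dew_q K e l A p C (A s) * (e * l s (A s) / p s (A s)) < 1"
  shows "dew_q K e l A p (insert s C) c
         \<le> dew_q K e l A p C c / (1 - dew_q K e l A p C (A s) * (e * l s (A s) / p s (A s)))"
proof -
  define b where "b = A s"
  define x where "x = e * l s b / p s b"
  define w where "w c = exp (- e * (\<Sum>r\<in>C. dew_lhat l A p r c))" for c
  define h where "h c = e * dew_lhat l A p s c" for c
  define Z where "Z = (\<Sum>c\<in>{1..K}. w c)"
  define Z' where "Z' = (\<Sum>c\<in>{1..K}. exp (- h c) * w c)"
  have w_pos: "0 < w c" for c by (simp add: w_def)
  have Z_pos: "0 < Z" unfolding Z_def using assms(1) by (intro sum_pos w_pos) auto
  have h_nonneg: "0 \<le> h c" for c
    using assms(4,6,7) by (simp add: h_def dew_lhat_def b_def)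
  have q_C: "dew_q K e l A p C c = w c / Z" for c by (simp add: dew_q_def w_def Z_def)
  have q_ins: "dew_q K e l A p (insert s C) c = exp (- h c) * w c / Z'" for c
    using assms(2,3) by (simp add: dew_q_def w_def h_def Z'_def mult_exp_exp algebra_simps)
  have lin: "(\<Sum>c\<in>{1..K}. h c * w c) = x * w b"
  proof -
    have "(\<Sum>c\<in>{1..K}. h c * w c) = (\<Sum>c\<in>{1..K}. if c = b then x * w b else 0)"
      by (intro sum.cong) (auto simp: h_def dew_lhat_def b_def x_def)
    then show ?thesis using assms(5) by (simp add: b_def)
  qed
  have "Z * (1 - w b / Z * x) = (\<Sum>c\<in>{1..K}. (1 - h c) * w c)"
    using Z_pos by (simp add: Z_def lin[symmetric] field_simps sum_subtractf)
  also have "\<dots> \<le> Z'"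
    unfolding Z'_def using w_pos exp_ge_add_one_self[of "- h _"]
    by (intro sum_mono mult_right_mono) (auto simp: less_imp_le)
  finally have Z'_ge: "Z * (1 - w b / Z * x) \<le> Z'" .
  have pos: "0 < Z * (1 - w b / Z * x)"
    using lt1 Z_pos by (simp add: q_C b_def x_def)
  have "exp (- h c) * w c / Z' \<le> w c / Z'"
    using w_pos[of c] h_nonneg[of c] Z'_ge pos by (intro divide_right_mono) auto
  also have "\<dots> \<le> w c / (Z * (1 - w b / Z * x))"
    using w_pos[of c] Z'_ge pos by (intro divide_left_mono) auto
  finally show ?thesis
    using Z_pos by (simp add: q_C q_ins b_def x_def)
qed

lemma N_max_le:
  assumes "1 \<le> T" and "\<And>t. t \<in> {1..T} \<Longrightarrow> d t \<le> D"
  shows "N_max T d \<le> 2 * D"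
proof -
  have "N_t T d t \<le> 2 * D" if t: "t \<in> {1..T}" for t
  proof -
    have "{s \<in> {1..T}. t \<le> s + d s \<and> s + d s < t + d t} \<subseteq> {t - D..<t + D}"
      using assms(2) t by fastforce
    then have "N_t T d t \<le> card {t - D..<t + D}"
      unfolding N_t_def by (intro card_mono) auto
    then show ?thesis by simp
  qed
  then show ?thesis using assms(1) by (simp add: N_max_def)
qed

lemma dew_eta'_le: "dew_eta' eta D \<le> 1 / (8 * real D)"
proof -
  have "dew_eta' eta D \<le> 1 / (4 * exp 1 * real D)" by (simp add: dew_eta'_def)
  also have "\<dots> \<le> 1 / (8 * real D)"
    using exp_ge_add_one_self[of 1] by (cases "D = 0") (auto intro!: divide_left_mono)
  finally show ?thesis .
qed

lemma le_divide_power_of_step: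
  fixes f :: "nat \<Rightarrow> real"
  assumes "k \<le> n" and "0 < c" and "\<And>m. k \<le> m \<Longrightarrow> m < n \<Longrightarrow> f (Suc m) \<le> f m / c"
  shows "f n \<le> f k / c ^ (n - k)"
  using assms(1)
proof (induction n rule: dec_induct)
  case (step m)
  have "f (Suc m) \<le> f m / c" using step assms(3) by simp
  also have "\<dots> \<le> f k / c ^ (m - k) / c" using step.IH assms(2) by (intro divide_right_mono) auto
  finally show ?case using step.hyps by (simp add: Suc_diff_le mult.commute)
qed simp

lemma downward_closed_eq_atLeastAtMost_card:
  fixes M :: "nat set"
  assumes "M \<subseteq> {1..n}" and "\<And>m m'. m \<in> M \<Longrightarrow> 1 \<le> m' \<Longrightarrow> m' \<le> m \<Longrightarrow> m' \<in> M"
  shows "M = {1..card M}"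
proof (cases "M = {}")
  case False
  have fin: "finite M" using assms(1) finite_subset by blast
  have "M = {1..Max M}"
    using assms(1) assms(2)[OF Max_in[OF fin False]] fin by auto
  then show ?thesis by (metis card_atLeastAtMost diff_Suc_1)
qed simp

locale dew_sorted_run =
  fixes K T D :: nat and eta :: real
    and l :: "nat \<Rightarrow> nat \<Rightarrow> real" and d A z :: "nat \<Rightarrow> nat"
  assumes K_pos: "1 \<le> K" and D_pos: "1 \<le> D"
    and eta_pos: "0 < eta" and eta_le: "eta \<le> 1 / (8 * real D)"
    and loss: "\<And>t a. t \<in> {1..T} \<Longrightarrow> a \<in> {1..K} \<Longrightarrow> 0 \<le> l t a \<and> l t a \<le> 1"
    and delay_le: "\<And>t. t \<in> {1..T} \<Longrightarrow> d t \<le> D"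
    and action: "\<And>t. t \<in> {1..T} \<Longrightarrow> A t \<in> {1..K}"
    and z_bij: "bij_betw z {1..T} {1..T}"
    and z_sorted: "\<And>i j. i \<in> {1..T} \<Longrightarrow> j \<in> {1..T} \<Longrightarrow> i \<le> j \<Longrightarrow> z i + d (z i) \<le> z j + d (z j)"
begin

abbreviation "p \<equiv> dew_p K eta l d A"
abbreviation "q \<equiv> dew_q K eta l A p"

definition \<Psi> :: "nat \<Rightarrow> nat set" where "\<Psi> j = z ` {1..j}"

definition observed :: "nat \<Rightarrow> nat set" where
  "observed s = {r. 1 \<le> r \<and> r + d r \<le> s - 1}"

text \<open>The q(\<Psi> (j - 1))-weighted mean of eta times the loss estimate of round z j, i.e. the
  factor of dew_q_insert_le when z j arrives.\<close>
definition estimate_mass :: "nat \<Rightarrow> real" where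
  "estimate_mass j = q (\<Psi> (j - 1)) (A (z j)) * (eta * l (z j) (A (z j)) / p (z j) (A (z j)))"

lemma z_in: "m \<in> {1..T} \<Longrightarrow> z m \<in> {1..T}"
  using z_bij by (auto simp: bij_betw_def)

lemma z_inj: "inj_on z {1..T}"
  using z_bij by (simp add: bij_betw_def)

lemma q_pos: "0 < q C c"
  using K_pos by (rule dew_q_pos)

lemma p_eq_q_observed: "1 \<le> s \<Longrightarrow> p s = q (observed s)"
  unfolding observed_def by (rule dew_p_eq_dew_q)

lemma p_pos: "1 \<le> s \<Longrightarrow> 0 < p s c"
  using p_eq_q_observed q_pos by simp

lemma q_\<Psi>_step:
  assumes j: "j \<in> {1..T}" and lt1: "estimate_mass j < 1"
  shows "q (\<Psi> j) c \<le> q (\<Psi> (j - 1)) c / (1 - estimate_mass j)"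
proof -
  have zj: "z j \<in> {1..T}" using z_in j .
  obtain m where m: "j = Suc m" using j by (cases j) auto
  have \<Psi>_j: "\<Psi> j = insert (z j) (\<Psi> (j - 1))"
    by (simp add: \<Psi>_def m atLeastAtMostSuc_conv)
  have "z j \<notin> \<Psi> (j - 1)"
    using j inj_on_image_mem_iff[OF z_inj, of j "{1..j-1}"] by (force simp: \<Psi>_def)
  then have "q (insert (z j) (\<Psi> (j - 1))) c \<le> q (\<Psi> (j - 1)) c /
      (1 - q (\<Psi> (j - 1)) (A (z j)) * (eta * l (z j) (A (z j)) / p (z j) (A (z j))))"
    using lt1 zj K_pos eta_pos loss action p_pos
    by (intro dew_q_insert_le) (auto simp: \<Psi>_def estimate_mass_def)
  then show ?thesis by (simp add: \<Psi>_j estimate_mass_def)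
qed

lemma q_\<Psi>_growth:
  assumes j: "j \<in> {1..T}" and small: "estimate_mass j \<le> 1 / (4 * real D)"
  shows "q (\<Psi> j) c \<le> q (\<Psi> (j - 1)) c / (1 - 1 / (4 * real D))"
proof -
  have quarter: "1 / (4 * real D) \<le> 1 / 4" using D_pos by (simp add: field_simps)
  have "q (\<Psi> j) c \<le> q (\<Psi> (j - 1)) c / (1 - estimate_mass j)"
    using j small quarter by (intro q_\<Psi>_step) auto
  also have "\<dots> \<le> q (\<Psi> (j - 1)) c / (1 - 1 / (4 * real D))"
    using small quarter q_pos by (intro divide_left_mono) (auto intro: less_imp_le)
  finally show ?thesis .
qed

lemma observed_eq_\<Psi>:
  assumes j: "j \<in> {1..T}"
  obtains k where "k < j" and "observed (z j) = \<Psi> k"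
proof -
  define M where "M = {m \<in> {1..T}. z m \<in> observed (z j)}"
  have "observed (z j) \<subseteq> z ` {1..T}"
    using z_in[OF j] z_bij by (auto simp: observed_def bij_betw_def)
  then have obs_M: "observed (z j) = z ` M" by (auto simp: M_def)
  have M_sub: "M \<subseteq> {1..j - 1}"
  proof
    fix m assume m: "m \<in> M"
    have "\<not> j \<le> m"
    proof
      assume "j \<le> m"
      then have "z j + d (z j) \<le> z m + d (z m)" using z_sorted j m by (auto simp: M_def)
      then show False using m z_in[OF j] by (auto simp: M_def observed_def)
    qed
    then show "m \<in> {1..j - 1}" using m by (auto simp: M_def)
  qed
  have M_down: "m' \<in> M" if "m \<in> M" "1 \<le> m'" "m' \<le> m" for m m'
  proof -
    have "m' \<in> {1..T}" and "z m' + d (z m') \<le> z m + d (z m)"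
      using that z_sorted[of m' m] by (auto simp: M_def)
    then show ?thesis using that z_in[of m'] by (auto simp: M_def observed_def)
  qed
  have "M = {1..card M}"
    using M_sub M_down by (intro downward_closed_eq_atLeastAtMost_card) auto
  moreover have "card M < j"
    using card_mono[OF _ M_sub] j by auto
  ultimately show ?thesis
    using obs_M that by (metis \<Psi>_def)
qed

text \<open>Every arrival between the prefix seen at time z j and the arrival of z j itself
  happens at a round r \<noteq> z j with z j \<le> r + d r \<le> z j + d (z j), so |r - z j| \<le> D.\<close>
lemma arrivals_between_le:
  assumes j: "j \<in> {1..T}" and "k < j" and obs: "observed (z j) = \<Psi> k"
  shows "j - 1 - k \<le> 2 * D"
proof -
  let ?s = "z j"
  have "z ` {k+1..j-1} \<subseteq> {?s - D..?s + D} - {?s}"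
  proof
    fix r assume "r \<in> z ` {k+1..j-1}"
    then obtain m where m: "m \<in> {k+1..j-1}" "r = z m" by auto
    have mT: "m \<in> {1..T}" using m j by auto
    have "r \<notin> \<Psi> k"
      using m inj_on_image_mem_iff[OF z_inj mT, of "{1..k}"] j by (force simp: \<Psi>_def)
    then have "?s \<le> r + d r" using z_in[OF mT] m by (auto simp: obs[symmetric] observed_def)
    moreover have "r + d r \<le> ?s + d ?s" using z_sorted mT j m by auto
    moreover have "d r \<le> D" "d ?s \<le> D" using delay_le z_in mT j m by auto
    moreover have "r \<noteq> ?s" using inj_onD[OF z_inj, of m j] m mT j by auto
    ultimately show "r \<in> {?s - D..?s + D} - {?s}" by auto
  qed
  then have "card (z ` {k+1..j-1}) \<le> card ({?s - D..?s + D} - {?s})" by (intro card_mono) auto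
  moreover have "card (z ` {k+1..j-1}) = j - 1 - k"
  proof -
    have "inj_on z {k+1..j-1}" using j by (intro inj_on_subset[OF z_inj]) auto
    then show ?thesis by (simp add: card_image)
  qed
  ultimately show ?thesis by simp
qed

lemma estimate_mass_le: "j \<in> {1..T} \<Longrightarrow> estimate_mass j \<le> 1 / (4 * real D)"
proof (induction j rule: less_induct)
  case (less j)
  define u where "u = 1 / (4 * real D)"
  define b where "b = A (z j)"
  obtain k where "k < j" and obs: "observed (z j) = \<Psi> k"
    using observed_eq_\<Psi>[OF less.prems] .
  have u: "0 < u" "u \<le> 1 / 4" using D_pos by (auto simp: u_def field_simps)
  have "q (\<Psi> (j - 1)) b \<le> q (\<Psi> k) b / (1 - u) ^ (j - 1 - k)"
  proof (rule le_divide_power_of_step)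
    fix m assume "k \<le> m" "m < j - 1"
    then have "Suc m \<in> {1..T}" "Suc m < j" using less.prems by auto
    then show "q (\<Psi> (Suc m)) b \<le> q (\<Psi> m) b / (1 - u)"
      using q_\<Psi>_growth less.IH unfolding u_def by fastforce
  qed (use \<open>k < j\<close> u in auto)
  also have "\<dots> \<le> 2 * q (\<Psi> k) b"
  proof -
    have "1 / 2 \<le> 1 - real (j - 1 - k) * u"
      using arrivals_between_le[OF less.prems \<open>k < j\<close> obs] D_pos by (simp add: u_def field_simps)
    also have "\<dots> \<le> (1 - u) ^ (j - 1 - k)"
      using Bernoulli_inequality[of "- u" "j - 1 - k"] u by simp
    finally show ?thesis using q_pos[of "\<Psi> k" b] by (simp add: field_simps)
  qed
  finally have q_le: "q (\<Psi> (j - 1)) b \<le> 2 * q (\<Psi> k) b" .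
  have "estimate_mass j = q (\<Psi> (j - 1)) b * (eta * l (z j) b / q (\<Psi> k) b)"
    using less.prems z_in by (simp add: estimate_mass_def b_def p_eq_q_observed obs)
  also have "\<dots> \<le> 2 * q (\<Psi> k) b * (eta * 1 / q (\<Psi> k) b)"
    using q_le loss[of "z j" b] action z_in less.prems eta_pos q_pos[of "\<Psi> k" b]
    by (intro mult_mono divide_right_mono mult_left_mono) (auto simp: b_def)
  also have "\<dots> = 2 * eta" using q_pos[of "\<Psi> k" b] by simp
  also have "\<dots> \<le> u" using eta_le by (simp add: u_def)
  finally show ?case by (simp add: u_def)
qed

end

theorem lemma10:
  fixes K T dmax :: nat and eta :: real
    and l :: "nat \<Rightarrow> nat \<Rightarrow> real" and d :: "nat \<Rightarrow> nat" and A :: "nat \<Rightarrow> nat"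
    and z :: "nat \<Rightarrow> nat"
  assumes "K \<ge> 2" and "T \<ge> 1" and "eta > 0"
    and "\<And>t a. t \<in> {1..T} \<Longrightarrow> a \<in> {1..K} \<Longrightarrow> 0 \<le> l t a \<and> l t a \<le> 1"
    and "\<And>t. t \<in> {1..T} \<Longrightarrow> d t \<le> dmax"
    and "\<And>t. t \<in> {1..T} \<Longrightarrow> A t \<in> {1..K}"
    and "N_max T d \<ge> 1"
    and "bij_betw z {1..T} {1..T}"
    and "\<And>i j. i \<in> {1..T} \<Longrightarrow> j \<in> {1..T} \<Longrightarrow> i \<le> j \<Longrightarrow> z i + d (z i) \<le> z j + d (z j)"
    and "i \<in> {1..T}" and "a \<in> {1..K}"
  shows "dew_q K (dew_eta' eta dmax) l A (dew_p K (dew_eta' eta dmax) l d A) (z ` {1..i}) a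
         \<le> (1 + 1 / (2 * real (N_max T d) - 1)) *
           dew_q K (dew_eta' eta dmax) l A (dew_p K (dew_eta' eta dmax) l d A) (z ` {1..i-1}) a"
proof -
  define e where "e = dew_eta' eta dmax"
  define N where "N = N_max T d"
  have N_le: "N \<le> 2 * dmax" using N_max_le assms(2,5) by (simp add: N_def)
  have N_pos: "1 \<le> N" using assms(7) by (simp add: N_def)
  have dmax_pos: "1 \<le> dmax" using N_le N_pos by simp
  have "0 < e" using dmax_pos assms(3) by (simp add: e_def dew_eta'_def)
  then interpret dew_sorted_run K T dmax e l d A z
    using assms dmax_pos dew_eta'_le by unfold_locales (auto simp: e_def)
  have "q (\<Psi> i) a \<le> q (\<Psi> (i - 1)) a / (1 - 1 / (4 * real dmax))"
    using q_\<Psi>_growth estimate_mass_le assms(10) by blast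
  also have "\<dots> \<le> q (\<Psi> (i - 1)) a / (1 - 1 / (2 * real N))"
  proof -
    have "1 / (4 * real dmax) \<le> 1 / (2 * real N)" and "1 / (2 * real N) \<le> 1 / 2"
      using N_le N_pos by (simp_all add: frac_le)
    then show ?thesis
      using q_pos[of "\<Psi> (i - 1)" a] by (intro divide_left_mono mult_pos_pos) auto
  qed
  also have "\<dots> = (1 + 1 / (2 * real N - 1)) * q (\<Psi> (i - 1)) a"
    using N_pos by (simp add: field_simps)
  finally show ?thesis by (simp add: e_def N_def \<Psi>_def)
qed

end
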